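(* For every homeomorphism $h$ of the Kirch space $(\mathbb{N},\tau_K)$ and every odd prime $p$, we have $\tilde h(\mathcal{F}_{\{p,2p\}})=\mathcal{F}_{\{p,2p\}}$, where $\tilde h(\mathcal{F})=\{h[A]:A\in\mathcal{F}\}$.
   Context: $\mathbb{N}=\{1,2,\dots\}$, $\mathbb{N}_0=\{0\}\cup\mathbb{N}$. The Kirch topology $\tau_K$ on $\mathbb{N}$ is generated by the base of all $a+b\mathbb{N}_0=\{a+bn:n\in\mathbb{N}_0\}$ with $a,b\in\mathbb{N}$ coprime and $b$ square-free. Closures $\overline{U}$ are in $\tau_K$; $\tau_x=\{U\in\tau_K:x\in U\}$. For finite $E\subseteq\mathbb{N}$, $\mathcal{F}_E=\{B\subseteq\mathbb{N}:\exists (U_x)_{x\in E}\in\prod_{x\in E}\tau_x\ (\bigcap_{x\in E}\overline{U_x}\subseteq B)\}$. $h[A]=\{h(a):a\in A\}$. *)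

theory Defs
  imports "HOL-Analysis.Analysis" "HOL-Computational_Algebra.Squarefree"
begin

definition Npos :: "nat set" where
  "Npos = {1..}"

definition kirch_basic :: "nat \<Rightarrow> nat \<Rightarrow> nat set" where
  "kirch_basic a b = {a + b * n | n. True}"

definition kirch_base :: "nat set set" where
  "kirch_base = {kirch_basic a b | a b. a \<ge> 1 \<and> b \<ge> 1 \<and> coprime a b \<and> squarefree b}"

definition kirch_open :: "nat set \<Rightarrow> bool" where
  "kirch_open U \<longleftrightarrow> U \<subseteq> Npos \<and> (\<forall>x\<in>U. \<exists>B\<in>kirch_base. x \<in> B \<and> B \<subseteq> U)"

definition kirch_topology :: "nat topology" where
  "kirch_topology = topology kirch_open"

definition kirch_nbhds :: "nat \<Rightarrow> nat set set" where
  "kirch_nbhds x = {U. openin kirch_topology U \<and> x \<in> U}"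

definition kirch_F :: "nat set \<Rightarrow> nat set set" where
  "kirch_F E = {B. B \<subseteq> Npos \<and> (\<exists>U. (\<forall>x\<in>E. U x \<in> kirch_nbhds x) \<and>
      (\<Inter>x\<in>E. kirch_topology closure_of (U x)) \<subseteq> B)}"

end

theory Submission
  imports Defs
begin

text \<open>
  The closure of a basic set x + b N_0 (b squarefree) consists of the z that, modulo every
  prime divisor q of b, are 0 or congruent to x. Hence F_E is generated by the cylinders of
  the residue profile q \<mapsto> kirch_residues E q, and F_E \<subseteq> F_E' holds iff at every odd prime
  the residues allowed by E' are among those allowed by E.

  A homeomorphism h maps F_E to F_h[E], so it induces an order automorphism of the poset of
  all F_E and preserves the number of filters above a given one. The top of the poset has
  profile {0} everywhere; F_{q,2q} has the full profile at q and {0} elsewhere, and the filters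
  above it are the top, itself and the q - 1 filters with profile {0, a} at q, each of which
  has only the top above it. Counting shows that the image of F_{p,2p} is again some F_{q,2q},
  so q = p, except for p = 3, where a filter with one nonzero residue at each of two primes
  has the same picture. That case is excluded because the image would lie below a residue
  filter at a prime r \<noteq> 3, whose preimage would then lie above both F_{3,6} and the fixed
  F_{r,2r} and hence be the top.
\<close>

lemma squarefree_lcm:
  fixes b c :: nat
  assumes "squarefree b" "squarefree c"
  shows "squarefree (lcm b c)"
proof -
  have "b \<noteq> 0" "c \<noteq> 0" using assms not_squarefree_0 by metis+
  then show ?thesis
    using assms by (auto simp: squarefree_factorial_semiring'' multiplicity_lcm)
qed

lemma squarefree_dvdI:
  fixes g d :: nat
  assumes "squarefree g" "\<And>q. prime q \<Longrightarrow> q dvd g \<Longrightarrow> q dvd d"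
  shows "g dvd d"
proof (cases "d = 0")
  case False
  have "g \<noteq> 0" using assms(1) by (metis not_squarefree_0)
  moreover have "multiplicity q g \<le> multiplicity q d" if "prime q" for q
  proof (cases "q dvd g")
    case True
    then have "multiplicity q g \<le> 1"
      using assms(1) \<open>g \<noteq> 0\<close> \<open>prime q\<close> squarefree_factorial_semiring'' by blast
    moreover have "0 < multiplicity q d"
      using assms(2) True \<open>prime q\<close> False by (simp add: prime_multiplicity_gt_zero_iff)
    ultimately show ?thesis by linarith
  qed (simp add: not_dvd_imp_multiplicity_0)
  ultimately show ?thesis using False by (simp add: prime_multiplicity_le_imp_dvd)
qed simp

lemma prime_dvd_coprime_not_dvd: "coprime x b \<Longrightarrow> prime (q::nat) \<Longrightarrow> q dvd b \<Longrightarrow> \<not> q dvd x"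
  using coprime_common_divisor not_prime_unit by blast

lemma add_mod_eq_self_iff: "((a::nat) + k) mod l = a mod l \<longleftrightarrow> l dvd k"
  using mod_eq_dvd_iff_nat[of a "a + k" l] by auto

lemma odd_prime_dvd_double_iff:
  assumes "prime (l::nat)" "odd l"
  shows "l dvd 2 * d \<longleftrightarrow> l dvd d"
proof -
  have "\<not> l dvd 2" using assms primes_dvd_imp_eq[OF assms(1) two_is_prime_nat] by auto
  then show ?thesis using prime_dvd_mult_iff[OF assms(1)] by auto
qed

lemma odd_prime_ge_3: "prime (q::nat) \<Longrightarrow> odd q \<Longrightarrow> 3 \<le> q"
  using prime_ge_2_nat[of q] by (cases "q = 2") auto

lemma lessThan_not_subset_doubleton: "3 \<le> q \<Longrightarrow> \<not> {..<q} \<subseteq> {0, a::nat}"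
proof
  assume "3 \<le> q" "{..<q} \<subseteq> {0, a}"
  moreover have "1 \<in> {..<q}" "2 \<in> {..<q}" using \<open>3 \<le> q\<close> by auto
  ultimately have "1 \<in> {0, a}" "2 \<in> {0, a}" by blast+
  then show False by auto
qed

lemma subset_zero_doubleton_eq: "0 \<in> S \<Longrightarrow> S \<subseteq> {0, a} \<Longrightarrow> S \<noteq> {0} \<Longrightarrow> S = {0, a}"
  by auto

lemma prod_primes_not_dvd:
  fixes S :: "nat set" and x :: nat
  assumes "finite S" "\<forall>q\<in>S. prime q"
  defines "m \<equiv> \<Prod>q\<in>{q\<in>S. \<not> q dvd x}. q"
  shows "0 < m" "squarefree m" "coprime x m" "\<And>q. q \<in> S \<Longrightarrow> \<not> q dvd x \<Longrightarrow> q dvd m"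
proof -
  show "0 < m" unfolding m_def using assms(2) by (intro prod_pos) (simp add: prime_gt_0_nat)
  show "squarefree m" unfolding m_def
    by (rule squarefree_prod_coprime) (auto simp: assms primes_coprime squarefree_prime)
  show "coprime x m" unfolding m_def
    by (rule prod_coprime_right) (auto simp: assms prime_imp_coprime coprime_commute)
  show "q dvd m" if "q \<in> S" "\<not> q dvd x" for q
    unfolding m_def using assms(1) that by (intro dvd_prodI) auto
qed

lemma residue_and_multiple_exists:
  fixes S :: "nat set"
  assumes "finite S" "\<forall>l\<in>S. prime l" "prime q" "r < q"
  obtains z where "0 < z" "z mod q = r" "\<And>l. l \<in> S \<Longrightarrow> l \<noteq> q \<Longrightarrow> l dvd z"
proof -
  define M where "M = (\<Prod>l\<in>S - {q}. l)"
  have "M \<noteq> 0" unfolding M_def using assms(1,2) by (auto simp: prime_gt_0_nat)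
  moreover have "coprime M q" unfolding M_def
    by (rule prod_coprime_left) (use assms(2,3) in \<open>auto simp: primes_coprime\<close>)
  ultimately obtain s t where st: "M * s = q * t + 1"
    using bezout_nat[of M q] by auto
  define z where "z = M * s * r + M * q"
  have "z = r + q * (t * r + M)" unfolding z_def st by (simp add: algebra_simps)
  then have "z mod q = r" using assms(4) by simp
  moreover have "0 < z" unfolding z_def using \<open>M \<noteq> 0\<close> assms(3) by (simp add: prime_gt_0_nat)
  moreover have "l dvd z" if "l \<in> S" "l \<noteq> q" for l
  proof -
    have "l dvd M" unfolding M_def using that assms(1) by (intro dvd_prodI) auto
    then show ?thesis unfolding z_def by simp
  qed
  ultimately show thesis using that by blast
qed

lemma progressions_meet_le:
  fixes x z b c :: nat
  assumes "x \<le> z" "b \<noteq> 0" "gcd b c dvd z - x"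
  shows "\<exists>n m. x + b * n = z + c * m"
proof -
  obtain k where k: "z = x + gcd b c * k"
    using assms(1,3) by (metis dvdE le_add_diff_inverse)
  obtain s t where st: "b * s = c * t + gcd b c"
    using bezout_nat[OF assms(2)] by blast
  have "x + b * (s * k) = z + c * (t * k)"
    unfolding k mult.assoc[symmetric] st by (simp add: algebra_simps)
  then show ?thesis by blast
qed

lemma mem_kirch_basic: "y \<in> kirch_basic a b \<longleftrightarrow> (\<exists>n. y = a + b * n)"
  by (auto simp: kirch_basic_def)

lemma kirch_basic_self: "a \<in> kirch_basic a b"
  unfolding mem_kirch_basic by (rule exI[of _ 0]) simp

lemma kirch_basic_subset:
  assumes "y \<in> kirch_basic a b"
  shows "kirch_basic y b \<subseteq> kirch_basic a b"
proof
  fix z assume "z \<in> kirch_basic y b"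
  then obtain m where "z = y + b * m" by (auto simp: mem_kirch_basic)
  moreover obtain n where "y = a + b * n" using assms by (auto simp: mem_kirch_basic)
  ultimately have "z = a + b * (n + m)" by (simp add: algebra_simps)
  then show "z \<in> kirch_basic a b" by (auto simp: mem_kirch_basic)
qed

lemma kirch_basic_mono:
  assumes "b dvd c"
  shows "kirch_basic a c \<subseteq> kirch_basic a b"
proof
  fix z assume "z \<in> kirch_basic a c"
  then obtain m where "z = a + c * m" by (auto simp: mem_kirch_basic)
  moreover obtain k where "c = b * k" using assms by blast
  ultimately have "z = a + b * (k * m)" by simp
  then show "z \<in> kirch_basic a b" by (auto simp: mem_kirch_basic)
qed

lemma coprime_kirch_basic: "y \<in> kirch_basic a b \<Longrightarrow> coprime a b \<Longrightarrow> coprime y b"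
  unfolding mem_kirch_basic
  by (metis add.commute coprime_commute coprime_iff_gcd_eq_1 gcd_add_mult mult.commute)

lemma kirch_basic_in_base:
  "1 \<le> a \<Longrightarrow> 1 \<le> b \<Longrightarrow> coprime a b \<Longrightarrow> squarefree b \<Longrightarrow> kirch_basic a b \<in> kirch_base"
  unfolding kirch_base_def by blast

lemma kirch_baseE:
  assumes "B \<in> kirch_base" "y \<in> B"
  obtains b where "1 \<le> y" "1 \<le> b" "squarefree b" "coprime y b" "kirch_basic y b \<subseteq> B"
proof -
  obtain a b where ab: "B = kirch_basic a b" "1 \<le> a" "1 \<le> b" "coprime a b" "squarefree b"
    using assms(1) unfolding kirch_base_def by blast
  show thesis
  proof (rule that)
    show "1 \<le> y" using assms(2) ab(1,2) by (auto simp: mem_kirch_basic)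
    show "coprime y b" using coprime_kirch_basic assms(2) ab(1,4) by blast
    show "kirch_basic y b \<subseteq> B" using kirch_basic_subset assms(2) ab(1) by blast
  qed (use ab in auto)
qed

lemma kirch_open_base: "B \<in> kirch_base \<Longrightarrow> kirch_open B"
  unfolding kirch_open_def Npos_def
proof (intro conjI ballI subsetI)
  fix y assume "B \<in> kirch_base" "y \<in> B"
  then obtain b where b: "1 \<le> y" "1 \<le> b" "squarefree b" "coprime y b" "kirch_basic y b \<subseteq> B"
    by (rule kirch_baseE)
  then show "y \<in> {1..}" by simp
  have "kirch_basic y b \<in> kirch_base"
    using b by (intro kirch_basic_in_base)
  then show "\<exists>B'\<in>kirch_base. y \<in> B' \<and> B' \<subseteq> B"
    using b(5) kirch_basic_self by blast
qed

lemma kirch_openE: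
  assumes "kirch_open U" "y \<in> U"
  obtains b where "1 \<le> y" "1 \<le> b" "squarefree b" "coprime y b" "kirch_basic y b \<subseteq> U"
proof -
  obtain B where "B \<in> kirch_base" "y \<in> B" "B \<subseteq> U"
    using assms unfolding kirch_open_def by blast
  then show thesis
    by (metis kirch_baseE order_trans that)
qed

lemma istopology_kirch_open: "istopology kirch_open"
  unfolding istopology_def
proof (intro conjI allI impI)
  fix S T assume S: "kirch_open S" and T: "kirch_open T"
  show "kirch_open (S \<inter> T)"
    unfolding kirch_open_def
  proof (intro conjI ballI)
    show "S \<inter> T \<subseteq> Npos" using S unfolding kirch_open_def by auto
    fix x assume x: "x \<in> S \<inter> T"
    then obtain b where b: "1 \<le> x" "1 \<le> b" "squarefree b" "coprime x b" "kirch_basic x b \<subseteq> S"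
      using S by (meson IntD1 kirch_openE)
    obtain c where c: "1 \<le> c" "squarefree c" "coprime x c" "kirch_basic x c \<subseteq> T"
      using T x by (meson IntD2 kirch_openE)
    have "coprime x (lcm b c)"
      using b(4) c(3) coprime_divisors[of x x "lcm b c" "b * c"] by (simp add: lcm_least)
    then have "kirch_basic x (lcm b c) \<in> kirch_base"
      using b c squarefree_lcm[of b c]
      by (intro kirch_basic_in_base) (auto simp: lcm_pos_nat Suc_le_eq)
    moreover have "kirch_basic x (lcm b c) \<subseteq> S \<inter> T"
      using kirch_basic_mono[of b "lcm b c" x] kirch_basic_mono[of c "lcm b c" x] b(5) c(4) by auto
    ultimately show "\<exists>B\<in>kirch_base. x \<in> B \<and> B \<subseteq> S \<inter> T"
      using kirch_basic_self by blast
  qed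
next
  fix K assume "\<forall>S\<in>K. kirch_open S"
  then show "kirch_open (\<Union>K)"
    unfolding kirch_open_def by (meson Sup_upper2 Union_least UnionE)
qed

lemma openin_kirch_topology: "openin kirch_topology = kirch_open"
  unfolding kirch_topology_def using istopology_kirch_open by (simp add: topology_inverse')

lemma openin_kirch_basic:
  "1 \<le> a \<Longrightarrow> 1 \<le> b \<Longrightarrow> coprime a b \<Longrightarrow> squarefree b \<Longrightarrow> openin kirch_topology (kirch_basic a b)"
  by (simp add: openin_kirch_topology kirch_open_base kirch_basic_in_base)

lemma openin_kirch_topologyE:
  assumes "openin kirch_topology U" "y \<in> U"
  obtains b where "1 \<le> y" "1 \<le> b" "squarefree b" "coprime y b" "kirch_basic y b \<subseteq> U"
  using assms kirch_openE unfolding openin_kirch_topology by blast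

lemma topspace_kirch_topology: "topspace kirch_topology = Npos"
proof
  show "topspace kirch_topology \<subseteq> Npos"
    unfolding topspace_def openin_kirch_topology kirch_open_def by blast
  show "Npos \<subseteq> topspace kirch_topology"
  proof
    fix x assume "x \<in> Npos"
    then have "openin kirch_topology (kirch_basic x 1)"
      by (intro openin_kirch_basic) (auto simp: Npos_def)
    then show "x \<in> topspace kirch_topology"
      using kirch_basic_self openin_subset by blast
  qed
qed

section \<open>Closures of basic open sets\<close>

lemma kirch_basics_meet:
  fixes x z b c :: nat
  assumes "squarefree b" "c \<noteq> 0"
    and "\<And>q. prime q \<Longrightarrow> q dvd b \<Longrightarrow> q dvd c \<Longrightarrow> x mod q = z mod q"
  shows "kirch_basic x b \<inter> kirch_basic z c \<noteq> {}"
proof -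
  have "b \<noteq> 0" using assms(1) by (metis not_squarefree_0)
  have "gcd b c dvd max x z - min x z"
  proof (rule squarefree_dvdI)
    show "squarefree (gcd b c)" using assms(1) squarefree_mono by blast
    fix q :: nat assume "prime q" "q dvd gcd b c"
    then have "max x z mod q = min x z mod q" using assms(3) by (auto simp: max_def min_def)
    then show "q dvd max x z - min x z" by (simp add: mod_eq_dvd_iff_nat)
  qed
  then obtain n m where "x + b * n = z + c * m"
    using progressions_meet_le[of x z b c] progressions_meet_le[of z x c b] \<open>b \<noteq> 0\<close> assms(2)
    by (cases "x \<le> z") (auto simp: gcd.commute max_def min_def, metis)
  then have "x + b * n \<in> kirch_basic x b \<inter> kirch_basic z c"
    unfolding mem_kirch_basic Int_iff by metis
  then show ?thesis by blast
qed

lemma in_closure_of_kirch_basicD: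
  assumes z: "z \<in> kirch_topology closure_of kirch_basic x b" and q: "prime q" "q dvd b"
  shows "q dvd z \<or> z mod q = x mod q"
proof (rule ccontr)
  assume "\<not> (q dvd z \<or> z mod q = x mod q)"
  then have "coprime z q" "z mod q \<noteq> x mod q"
    using q(1) by (auto simp: prime_imp_coprime coprime_commute)
  moreover have "1 \<le> z"
    using z closure_of_subset_topspace by (fastforce simp: topspace_kirch_topology Npos_def)
  ultimately have "openin kirch_topology (kirch_basic z q)"
    using q(1) by (intro openin_kirch_basic) (auto simp: Suc_le_eq prime_gt_0_nat squarefree_prime)
  then obtain y where y: "y \<in> kirch_basic x b" "y \<in> kirch_basic z q"
    using z kirch_basic_self unfolding in_closure_of by blast
  have "y mod q = x mod q"
    using y(1) q(2) by (auto simp: mem_kirch_basic mult.assoc elim!: dvdE)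
  moreover have "y mod q = z mod q"
    using y(2) by (auto simp: mem_kirch_basic)
  ultimately show False using \<open>z mod q \<noteq> x mod q\<close> by simp
qed

lemma in_closure_of_kirch_basicI:
  assumes "squarefree b" "1 \<le> z" and z: "\<And>q. prime q \<Longrightarrow> q dvd b \<Longrightarrow> q dvd z \<or> z mod q = x mod q"
  shows "z \<in> kirch_topology closure_of kirch_basic x b"
  unfolding in_closure_of
proof (intro conjI allI impI)
  show "z \<in> topspace kirch_topology" using assms(2) by (simp add: topspace_kirch_topology Npos_def)
  fix T assume "z \<in> T \<and> openin kirch_topology T"
  then obtain c where c: "1 \<le> c" "coprime z c" "kirch_basic z c \<subseteq> T"
    by (meson openin_kirch_topologyE)
  have "kirch_basic x b \<inter> kirch_basic z c \<noteq> {}"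
  proof (rule kirch_basics_meet[OF assms(1)])
    fix q :: nat assume q: "prime q" "q dvd b" "q dvd c"
    then have "\<not> q dvd z" using c(2) prime_dvd_coprime_not_dvd by blast
    then show "x mod q = z mod q" using z[OF q(1,2)] by simp
  qed (use c in auto)
  then show "\<exists>y. y \<in> kirch_basic x b \<and> y \<in> T" using c(3) by blast
qed

section \<open>The filters F_E as residue filters\<close>

definition kirch_residues :: "nat set \<Rightarrow> nat \<Rightarrow> nat set" where
  "kirch_residues E q = {r. r < q \<and> (\<forall>x\<in>E. \<not> q dvd x \<longrightarrow> r = 0 \<or> r = x mod q)}"

definition residue_cylinder :: "(nat \<Rightarrow> nat set) \<Rightarrow> nat set \<Rightarrow> nat set" where
  "residue_cylinder R S = {z. 1 \<le> z \<and> (\<forall>q\<in>S. z mod q \<in> R q)}"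

definition residue_filter :: "(nat \<Rightarrow> nat set) \<Rightarrow> nat set set" where
  "residue_filter R =
    {B. B \<subseteq> Npos \<and> (\<exists>S. finite S \<and> (\<forall>q\<in>S. prime q) \<and> residue_cylinder R S \<subseteq> B)}"

definition admissible :: "nat set \<Rightarrow> bool" where
  "admissible E \<longleftrightarrow> finite E \<and> E \<noteq> {} \<and> E \<subseteq> Npos"

lemma zero_in_kirch_residues: "prime q \<Longrightarrow> 0 \<in> kirch_residues E q"
  unfolding kirch_residues_def using prime_gt_0_nat by auto

lemma kirch_residues_less: "r \<in> kirch_residues E q \<Longrightarrow> r < q"
  unfolding kirch_residues_def by auto

lemma kirch_residues_two: "kirch_residues E 2 = {0, 1}"
  unfolding kirch_residues_def by (auto simp: odd_iff_mod_2_eq_one)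

lemma residue_cylinder_subset_closure_of_kirch_basic:
  assumes "x \<in> E" "squarefree b" "coprime x b" "\<And>q. prime q \<Longrightarrow> q dvd b \<Longrightarrow> q \<in> S"
  shows "residue_cylinder (kirch_residues E) S \<subseteq> kirch_topology closure_of kirch_basic x b"
proof
  fix z assume z: "z \<in> residue_cylinder (kirch_residues E) S"
  show "z \<in> kirch_topology closure_of kirch_basic x b"
  proof (rule in_closure_of_kirch_basicI[OF assms(2)])
    show "1 \<le> z" using z by (simp add: residue_cylinder_def)
    fix q :: nat assume q: "prime q" "q dvd b"
    then have "z mod q \<in> kirch_residues E q" using z assms(4) by (simp add: residue_cylinder_def)
    moreover have "\<not> q dvd x" using assms(3) q prime_dvd_coprime_not_dvd by blast
    ultimately show "q dvd z \<or> z mod q = x mod q" using assms(1) by (auto simp: kirch_residues_def)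
  qed
qed

lemma kirch_F_subset_residue_filter:
  assumes "finite E"
  shows "kirch_F E \<subseteq> residue_filter (kirch_residues E)"
proof
  fix B assume "B \<in> kirch_F E"
  then obtain U where B: "B \<subseteq> Npos" and U: "\<forall>x\<in>E. U x \<in> kirch_nbhds x"
    and UB: "(\<Inter>x\<in>E. kirch_topology closure_of (U x)) \<subseteq> B"
    unfolding kirch_F_def by blast
  have small: "\<forall>x\<in>E. \<exists>c. squarefree c \<and> coprime x c \<and> kirch_basic x c \<subseteq> U x"
  proof
    fix x assume "x \<in> E"
    then have "openin kirch_topology (U x)" "x \<in> U x" using U by (auto simp: kirch_nbhds_def)
    then obtain c where "squarefree c" "coprime x c" "kirch_basic x c \<subseteq> U x"
      by (rule openin_kirch_topologyE)
    then show "\<exists>c. squarefree c \<and> coprime x c \<and> kirch_basic x c \<subseteq> U x" by blast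
  qed
  obtain b where b: "\<And>x. x \<in> E \<Longrightarrow> squarefree (b x) \<and> coprime x (b x) \<and> kirch_basic x (b x) \<subseteq> U x"
    using bchoice[OF small] by blast
  define S where "S = prime_factors (\<Prod>x\<in>E. b x)"
  have "residue_cylinder (kirch_residues E) S \<subseteq> kirch_topology closure_of (U x)" if x: "x \<in> E" for x
  proof -
    have "b y \<noteq> 0" if "y \<in> E" for y using b[OF that] by (metis not_squarefree_0)
    then have "(\<Prod>x\<in>E. b x) \<noteq> 0" using assms by simp
    then have "q \<in> S" if "prime q" "q dvd b x" for q
      unfolding S_def in_prime_factors_iff using that dvd_trans[OF that(2) dvd_prodI[OF assms x, of b]]
      by simp
    then have "residue_cylinder (kirch_residues E) S \<subseteq> kirch_topology closure_of kirch_basic x (b x)"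
      using b[OF x] by (intro residue_cylinder_subset_closure_of_kirch_basic[OF x]) auto
    also have "\<dots> \<subseteq> kirch_topology closure_of (U x)"
      using b[OF x] by (intro closure_of_mono) blast
    finally show ?thesis .
  qed
  then have "residue_cylinder (kirch_residues E) S \<subseteq> (\<Inter>x\<in>E. kirch_topology closure_of (U x))"
    by (rule INT_greatest)
  then have "residue_cylinder (kirch_residues E) S \<subseteq> B"
    using UB by (rule subset_trans)
  moreover have "finite S" "\<forall>q\<in>S. prime q"
    unfolding S_def by (auto intro: in_prime_factors_imp_prime)
  ultimately show "B \<in> residue_filter (kirch_residues E)"
    unfolding residue_filter_def using B by blast
qed

lemma residue_filter_subset_kirch_F:
  assumes "admissible E"
  shows "residue_filter (kirch_residues E) \<subseteq> kirch_F E"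
proof
  fix B assume "B \<in> residue_filter (kirch_residues E)"
  then obtain S where B: "B \<subseteq> Npos" and S: "finite S" "\<forall>q\<in>S. prime q"
    and SB: "residue_cylinder (kirch_residues E) S \<subseteq> B"
    unfolding residue_filter_def by blast
  define U where "U x = kirch_basic x (\<Prod>q\<in>{q\<in>S. \<not> q dvd x}. q)" for x
  note m = prod_primes_not_dvd[OF S]
  have U: "\<forall>x\<in>E. U x \<in> kirch_nbhds x"
    using assms m(1-3) unfolding kirch_nbhds_def U_def admissible_def Npos_def
    by (auto intro!: openin_kirch_basic kirch_basic_self simp: Suc_le_eq)
  have "(\<Inter>x\<in>E. kirch_topology closure_of (U x)) \<subseteq> residue_cylinder (kirch_residues E) S"
  proof
    fix z assume z: "z \<in> (\<Inter>x\<in>E. kirch_topology closure_of (U x))"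
    obtain x0 where "x0 \<in> E" using assms unfolding admissible_def by blast
    then have "1 \<le> z"
      using z closure_of_subset_topspace by (fastforce simp: topspace_kirch_topology Npos_def)
    moreover have "z mod q \<in> kirch_residues E q" if "q \<in> S" for q
    proof -
      have "q dvd z \<or> z mod q = x mod q" if "x \<in> E" "\<not> q dvd x" for x
      proof (rule in_closure_of_kirch_basicD)
        show "z \<in> kirch_topology closure_of kirch_basic x (\<Prod>q\<in>{q\<in>S. \<not> q dvd x}. q)"
          using z that(1) unfolding U_def by blast
      qed (use S(2) m(4) \<open>q \<in> S\<close> that(2) in auto)
      then show ?thesis
        using \<open>q \<in> S\<close> S(2) prime_gt_0_nat unfolding kirch_residues_def by (auto simp: dvd_eq_mod_eq_0)
    qed
    ultimately show "z \<in> residue_cylinder (kirch_residues E) S"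
      by (simp add: residue_cylinder_def)
  qed
  then have "(\<Inter>x\<in>E. kirch_topology closure_of (U x)) \<subseteq> B"
    using SB by (rule subset_trans)
  then show "B \<in> kirch_F E"
    unfolding kirch_F_def using B U by blast
qed

lemma kirch_F_eq_residue_filter:
  "admissible E \<Longrightarrow> kirch_F E = residue_filter (kirch_residues E)"
  using kirch_F_subset_residue_filter residue_filter_subset_kirch_F
  unfolding admissible_def by blast

lemma residue_filter_antimono:
  assumes "\<And>q. prime q \<Longrightarrow> R q \<subseteq> R' q"
  shows "residue_filter R' \<subseteq> residue_filter R"
proof
  fix B assume "B \<in> residue_filter R'"
  then obtain S where S: "B \<subseteq> Npos" "finite S" "\<forall>q\<in>S. prime q" "residue_cylinder R' S \<subseteq> B"
    unfolding residue_filter_def by blast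
  have "residue_cylinder R S \<subseteq> residue_cylinder R' S"
    using assms S(3) unfolding residue_cylinder_def by blast
  then have "residue_cylinder R S \<subseteq> B"
    using S(4) by (rule subset_trans)
  then show "B \<in> residue_filter R"
    using S(1-3) unfolding residue_filter_def by blast
qed

lemma residue_filter_subsetD:
  assumes sub: "residue_filter R' \<subseteq> residue_filter R" and "prime q"
    and zero: "\<And>l. prime l \<Longrightarrow> 0 \<in> R l" and less: "\<And>r. r \<in> R q \<Longrightarrow> r < q"
  shows "R q \<subseteq> R' q"
proof
  fix r assume r: "r \<in> R q"
  have "residue_cylinder R' {q} \<in> residue_filter R'"
    using \<open>prime q\<close> unfolding residue_filter_def residue_cylinder_def Npos_def by auto
  then have "residue_cylinder R' {q} \<in> residue_filter R"
    by (rule subsetD[OF sub])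
  then obtain S where S: "finite S" "\<forall>l\<in>S. prime l" "residue_cylinder R S \<subseteq> residue_cylinder R' {q}"
    unfolding residue_filter_def by blast
  obtain z where z: "0 < z" "z mod q = r" "\<And>l. l \<in> S \<Longrightarrow> l \<noteq> q \<Longrightarrow> l dvd z"
    using residue_and_multiple_exists[OF S(1,2) \<open>prime q\<close> less[OF r]] by blast
  have "z mod l \<in> R l" if "l \<in> S" for l
    using z r zero S(2) that by (cases "l = q") auto
  then have "z \<in> residue_cylinder R S"
    using z(1) by (simp add: residue_cylinder_def)
  then show "r \<in> R' q" using S(3) z(2) by (auto simp: residue_cylinder_def)
qed

lemma kirch_F_subset_iff:
  assumes "admissible E" "admissible E'"
  shows "kirch_F E \<subseteq> kirch_F E' \<longleftrightarrow>
    (\<forall>q. prime q \<longrightarrow> odd q \<longrightarrow> kirch_residues E' q \<subseteq> kirch_residues E q)"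
proof
  assume "kirch_F E \<subseteq> kirch_F E'"
  then show "\<forall>q. prime q \<longrightarrow> odd q \<longrightarrow> kirch_residues E' q \<subseteq> kirch_residues E q"
    using residue_filter_subsetD zero_in_kirch_residues kirch_residues_less
    unfolding kirch_F_eq_residue_filter[OF assms(1)] kirch_F_eq_residue_filter[OF assms(2)]
    by metis
next
  assume odd: "\<forall>q. prime q \<longrightarrow> odd q \<longrightarrow> kirch_residues E' q \<subseteq> kirch_residues E q"
  have "kirch_residues E' q \<subseteq> kirch_residues E q" if "prime q" for q
    using odd that kirch_residues_two prime_odd_nat[OF that] prime_ge_2_nat[OF that]
    by (cases "q = 2") auto
  then show "kirch_F E \<subseteq> kirch_F E'"
    unfolding kirch_F_eq_residue_filter[OF assms(1)] kirch_F_eq_residue_filter[OF assms(2)]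
    by (rule residue_filter_antimono)
qed

lemma kirch_F_eq_iff:
  assumes "admissible E" "admissible E'"
  shows "kirch_F E = kirch_F E' \<longleftrightarrow>
    (\<forall>q. prime q \<longrightarrow> odd q \<longrightarrow> kirch_residues E q = kirch_residues E' q)"
  unfolding set_eq_subset kirch_F_subset_iff[OF assms] kirch_F_subset_iff[OF assms(2,1)] by auto

lemma kirch_residues_subset: "x \<in> E \<Longrightarrow> \<not> q dvd x \<Longrightarrow> kirch_residues E q \<subseteq> {0, x mod q}"
  unfolding kirch_residues_def by auto

lemma kirch_residues_all_dvd: "(\<And>x. x \<in> E \<Longrightarrow> q dvd x) \<Longrightarrow> kirch_residues E q = {..<q}"
  unfolding kirch_residues_def by auto

lemma kirch_residues_two_classes:
  assumes "prime q" "y \<in> E" "y' \<in> E" "\<not> q dvd y" "\<not> q dvd y'" "y mod q \<noteq> y' mod q"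
  shows "kirch_residues E q = {0}"
proof -
  have "r = 0" if "r \<in> kirch_residues E q" for r
  proof -
    have "r = 0 \<or> r = y mod q" "r = 0 \<or> r = y' mod q"
      using that assms(2-5) unfolding kirch_residues_def by blast+
    then show "r = 0" using assms(6) by auto
  qed
  then show ?thesis using zero_in_kirch_residues[OF assms(1)] by blast
qed

lemma kirch_residues_one_class:
  assumes "prime q" "x \<in> E" "\<not> q dvd x" "\<And>y. y \<in> E \<Longrightarrow> y mod q = x mod q"
  shows "kirch_residues E q = {0, x mod q}"
proof
  show "kirch_residues E q \<subseteq> {0, x mod q}"
    using kirch_residues_subset assms(2,3) by blast
  have "x mod q \<in> kirch_residues E q"
    unfolding kirch_residues_def
  proof (intro CollectI conjI ballI impI disjI2)
    show "x mod q < q" using assms(1) prime_gt_0_nat by simp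
    show "x mod q = y mod q" if "y \<in> E" for y
      using assms(4)[OF that] by (rule sym)
  qed
  then show "{0, x mod q} \<subseteq> kirch_residues E q"
    using zero_in_kirch_residues[OF assms(1)] by blast
qed

lemma kirch_residues_cases:
  assumes "prime q"
  obtains "kirch_residues E q = {0}"
    | a where "0 < a" "a < q" "kirch_residues E q = {0, a}"
    | "kirch_residues E q = {..<q}"
proof (cases "\<forall>x\<in>E. q dvd x")
  case True
  then show thesis using that(3) kirch_residues_all_dvd by blast
next
  case False
  then obtain x where x: "x \<in> E" "\<not> q dvd x" by blast
  then have "0 < x mod q" "x mod q < q"
    using assms prime_gt_0_nat by (auto simp: dvd_eq_mod_eq_0)
  then show thesis
    using that(1,2) kirch_residues_subset[OF x] zero_in_kirch_residues[OF assms, of E] by blast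
qed

text \<open>Three terms are needed: modulo a prime not dividing d at most one of them vanishes, and the
  remaining ones have distinct residues.\<close>

definition progression3 :: "nat \<Rightarrow> nat \<Rightarrow> nat set" where
  "progression3 x d = {x, x + d, x + 2 * d}"

lemma admissible_progression3: "0 < x \<Longrightarrow> admissible (progression3 x d)"
  unfolding admissible_def progression3_def Npos_def by auto

lemma admissible_double: "0 < q \<Longrightarrow> admissible {q, 2 * q}"
  unfolding admissible_def Npos_def by auto

lemma kirch_residues_progression3_not_dvd:
  assumes l: "prime l" "odd l" and "\<not> l dvd d"
  shows "kirch_residues (progression3 x d) l = {0}"
proof -
  have d: "(y + d) mod l \<noteq> y mod l" "(y + 2 * d) mod l \<noteq> y mod l" for y
    using assms odd_prime_dvd_double_iff[OF l] by (simp_all add: add_mod_eq_self_iff)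
  have "\<exists>y\<in>progression3 x d. \<exists>y'\<in>progression3 x d.
      \<not> l dvd y \<and> \<not> l dvd y' \<and> y mod l \<noteq> y' mod l"
  proof (cases "l dvd x")
    case True
    then have "\<not> l dvd x + d" "\<not> l dvd x + 2 * d"
      using assms odd_prime_dvd_double_iff[OF l, of d] by (simp_all add: dvd_add_right_iff)
    moreover have "(x + 2 * d) mod l \<noteq> (x + d) mod l"
      using d[of "x + d"] by (simp add: mult_2 add.assoc)
    ultimately show ?thesis
      unfolding progression3_def by blast
  next
    case False
    moreover have "\<not> l dvd x + 2 * d" if "l dvd x + d"
      using that assms(3) by (metis add.assoc dvd_add_right_iff mult_2)
    ultimately show ?thesis
      using d[of x] unfolding progression3_def by blast
  qed
  then show ?thesis
    using kirch_residues_two_classes[OF l(1)] by blast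
qed

lemma kirch_residues_progression3_dvd:
  assumes "prime l" "l dvd d"
  shows "kirch_residues (progression3 x d) l = (if l dvd x then {..<l} else {0, x mod l})"
proof -
  have same_class: "y mod l = x mod l" if "y \<in> progression3 x d" for y
    using that assms(2) unfolding progression3_def by (auto elim!: dvdE simp: mult.left_commute)
  show ?thesis
  proof (cases "l dvd x")
    case True
    then have "l dvd y" if "y \<in> progression3 x d" for y
      using same_class[OF that] by (simp add: dvd_eq_mod_eq_0)
    then show ?thesis using True kirch_residues_all_dvd by simp
  next
    case False
    have "kirch_residues (progression3 x d) l = {0, x mod l}"
      by (rule kirch_residues_one_class[OF assms(1) _ False same_class]) (simp add: progression3_def)
    then show ?thesis using False by simp
  qed
qed

lemma kirch_residues_progression3:
  assumes "prime l" "odd l"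
  shows "kirch_residues (progression3 x d) l =
    (if \<not> l dvd d then {0} else if l dvd x then {..<l} else {0, x mod l})"
  using kirch_residues_progression3_not_dvd[OF assms] kirch_residues_progression3_dvd[OF assms(1)]
  by simp

lemma kirch_residues_double:
  assumes "prime q" "prime l" "odd l"
  shows "kirch_residues {q, 2 * q} l = (if l = q then {..<l} else {0})"
proof (cases "l = q")
  case False
  then have "\<not> l dvd q" using assms primes_dvd_imp_eq by blast
  moreover have "2 * q = q + q" by simp
  ultimately show ?thesis
    using False assms(2) odd_prime_dvd_double_iff[OF assms(2,3), of q]
    by (metis add_mod_eq_self_iff insert_iff kirch_residues_two_classes)
qed (subst kirch_residues_all_dvd, auto)

lemma kirch_residues_top: "prime l \<Longrightarrow> odd l \<Longrightarrow> kirch_residues (progression3 1 1) l = {0}"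
  by (auto simp: kirch_residues_progression3)

lemma kirch_residues_residue:
  assumes "prime q" "0 < a" "a < q" "prime l" "odd l"
  shows "kirch_residues (progression3 a q) l = (if l = q then {0, a} else {0})"
proof -
  have "l dvd q \<longleftrightarrow> l = q" using primes_dvd_imp_eq[OF assms(4,1)] by auto
  moreover have "\<not> q dvd a" using assms(2,3) by (simp add: nat_dvd_not_less)
  ultimately show ?thesis using assms(3-5) by (simp add: kirch_residues_progression3)
qed

lemma kirch_residues_two_primes:
  assumes "prime q1" "prime q2" "\<not> q1 dvd x" "\<not> q2 dvd x" "prime l" "odd l"
  shows "kirch_residues (progression3 x (q1 * q2)) l =
    (if l = q1 \<or> l = q2 then {0, x mod l} else {0})"
proof -
  have "l dvd q1 * q2 \<longleftrightarrow> l = q1 \<or> l = q2"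
    using prime_dvd_mult_iff[OF assms(5)] primes_dvd_imp_eq[OF assms(5,1)]
      primes_dvd_imp_eq[OF assms(5,2)] by auto
  then show ?thesis using assms(3-6) by (auto simp: kirch_residues_progression3)
qed

section \<open>The poset of the filters F_E\<close>

definition kirch_F_top :: "nat set set" where
  "kirch_F_top = kirch_F (progression3 1 1)"

definition kirch_F_residue :: "nat \<Rightarrow> nat \<Rightarrow> nat set set" where
  "kirch_F_residue q a = kirch_F (progression3 a q)"

lemma kirch_F_subset_top: "admissible E \<Longrightarrow> kirch_F E \<subseteq> kirch_F_top"
  \<comment> \<open>without deleting One_nat_def, simp rewrites progression3 1 1 before kirch_residues_top applies\<close>
  unfolding kirch_F_top_def kirch_F_subset_iff[OF _ admissible_progression3[OF zero_less_one]]
  using kirch_residues_top zero_in_kirch_residues by (simp del: One_nat_def)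

lemma kirch_F_eq_top_iff:
  "admissible E \<Longrightarrow> kirch_F E = kirch_F_top \<longleftrightarrow> (\<forall>l. prime l \<longrightarrow> odd l \<longrightarrow> kirch_residues E l = {0})"
  unfolding kirch_F_top_def kirch_F_eq_iff[OF _ admissible_progression3[OF zero_less_one]]
  using kirch_residues_top by (simp del: One_nat_def)

lemma kirch_F_eq_residue_iff:
  assumes "admissible E" "prime q" "0 < a" "a < q"
  shows "kirch_F E = kirch_F_residue q a \<longleftrightarrow>
    (\<forall>l. prime l \<longrightarrow> odd l \<longrightarrow> kirch_residues E l = (if l = q then {0, a} else {0}))"
  unfolding kirch_F_residue_def using assms
  by (simp add: kirch_F_eq_iff admissible_progression3 kirch_residues_residue)

lemma kirch_F_subset_residue_iff:
  assumes "admissible E" "prime q" "odd q" "0 < a" "a < q"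
  shows "kirch_F E \<subseteq> kirch_F_residue q a \<longleftrightarrow> a \<in> kirch_residues E q"
  unfolding kirch_F_residue_def using assms
  by (auto simp: kirch_F_subset_iff admissible_progression3 kirch_residues_residue
      zero_in_kirch_residues)

lemma kirch_F_eq_double_iff:
  assumes "admissible E" "prime q"
  shows "kirch_F E = kirch_F {q, 2 * q} \<longleftrightarrow>
    (\<forall>l. prime l \<longrightarrow> odd l \<longrightarrow> kirch_residues E l = (if l = q then {..<l} else {0}))"
  using assms
  by (simp add: kirch_F_eq_iff admissible_double prime_gt_0_nat kirch_residues_double)

lemma kirch_F_neq_topI:
  "admissible E \<Longrightarrow> prime q \<Longrightarrow> odd q \<Longrightarrow> kirch_residues E q \<noteq> {0} \<Longrightarrow> kirch_F E \<noteq> kirch_F_top"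
  using kirch_F_eq_top_iff by blast

lemma kirch_F_neqI:
  "admissible E \<Longrightarrow> admissible E' \<Longrightarrow> prime q \<Longrightarrow> odd q \<Longrightarrow>
    kirch_residues E q \<noteq> kirch_residues E' q \<Longrightarrow> kirch_F E \<noteq> kirch_F E'"
  using kirch_F_eq_iff by blast

definition kirch_filters :: "nat set set set" where
  "kirch_filters = {kirch_F E | E. admissible E}"

definition finer_filters :: "nat set set \<Rightarrow> nat set set set" where
  "finer_filters X = {Y \<in> kirch_filters. X \<subseteq> Y}"

lemma kirch_F_in_kirch_filters: "admissible E \<Longrightarrow> kirch_F E \<in> kirch_filters"
  unfolding kirch_filters_def by blast

lemma kirch_F_top_in_finer_filters: "X \<in> kirch_filters \<Longrightarrow> kirch_F_top \<in> finer_filters X"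
  unfolding finer_filters_def kirch_filters_def kirch_F_top_def
  using kirch_F_subset_top admissible_progression3[OF zero_less_one] by (auto simp: kirch_F_top_def)

lemma self_in_finer_filters: "X \<in> kirch_filters \<Longrightarrow> X \<in> finer_filters X"
  unfolding finer_filters_def by blast

lemma mem_finer_filters_kirch_F:
  assumes "admissible E"
  shows "Y \<in> finer_filters (kirch_F E) \<longleftrightarrow> (\<exists>E'. admissible E' \<and> Y = kirch_F E' \<and>
    (\<forall>l. prime l \<longrightarrow> odd l \<longrightarrow> kirch_residues E' l \<subseteq> kirch_residues E l))"
proof -
  have "Y \<in> finer_filters (kirch_F E) \<longleftrightarrow>
      (\<exists>E'. admissible E' \<and> Y = kirch_F E' \<and> kirch_F E \<subseteq> kirch_F E')"
    unfolding finer_filters_def kirch_filters_def by blast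
  then show ?thesis
    by (simp add: kirch_F_subset_iff[OF assms] cong: conj_cong)
qed

lemma kirch_F_supported_cases:
  assumes "admissible E" "prime q"
    and other: "\<And>l. prime l \<Longrightarrow> odd l \<Longrightarrow> l \<noteq> q \<Longrightarrow> kirch_residues E l = {0}"
  obtains "kirch_residues E q = {0}" "kirch_F E = kirch_F_top"
    | a where "0 < a" "a < q" "kirch_residues E q = {0, a}" "kirch_F E = kirch_F_residue q a"
    | "kirch_residues E q = {..<q}" "kirch_F E = kirch_F {q, 2 * q}"
proof (rule kirch_residues_cases[OF assms(2), of E])
  assume q: "kirch_residues E q = {0}"
  then have "kirch_F E = kirch_F_top"
    unfolding kirch_F_eq_top_iff[OF assms(1)] using other by metis
  then show thesis using that(1) q by blast
next
  fix a assume a: "0 < a" "a < q" and q: "kirch_residues E q = {0, a}"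
  then have "kirch_F E = kirch_F_residue q a"
    unfolding kirch_F_eq_residue_iff[OF assms(1,2) a] using other by auto
  then show thesis using that(2) a q by blast
next
  assume q: "kirch_residues E q = {..<q}"
  then have "kirch_F E = kirch_F {q, 2 * q}"
    unfolding kirch_F_eq_double_iff[OF assms(1,2)] using other by auto
  then show thesis using that(3) q by blast
qed

lemma finer_filters_top: "finer_filters kirch_F_top = {kirch_F_top}"
  using kirch_F_subset_top kirch_F_top_in_finer_filters admissible_progression3[OF zero_less_one]
  unfolding finer_filters_def kirch_filters_def kirch_F_top_def by fastforce

lemma kirch_filters_subset_top: "X \<in> kirch_filters \<Longrightarrow> X \<subseteq> kirch_F_top"
  unfolding kirch_filters_def using kirch_F_subset_top by blast

lemma kirch_filters_Pow: "X \<in> kirch_filters \<Longrightarrow> X \<subseteq> Pow Npos"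
  unfolding kirch_filters_def kirch_F_def by blast

lemma kirch_F_supported_below_residue:
  assumes "admissible E" "prime q" "odd q" "0 < a"
    and "kirch_residues E q \<subseteq> {0, a}"
    and "\<And>l. prime l \<Longrightarrow> odd l \<Longrightarrow> l \<noteq> q \<Longrightarrow> kirch_residues E l = {0}"
  shows "kirch_F E \<in> {kirch_F_top, kirch_F_residue q a}"
proof (rule kirch_F_supported_cases[OF assms(1,2,6)])
  assume "kirch_F E = kirch_F_top"
  then show ?thesis by simp
next
  fix b assume "0 < b" "kirch_residues E q = {0, b}" "kirch_F E = kirch_F_residue q b"
  then show ?thesis using assms(4,5) by auto
next
  assume "kirch_residues E q = {..<q}"
  then have "{..<q} \<subseteq> {0, a}" using assms(5) by simp
  then show ?thesis using lessThan_not_subset_doubleton[OF odd_prime_ge_3[OF assms(2,3)]] by blast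
qed

lemma finer_filters_residue:
  assumes q: "prime q" "odd q" and a: "0 < a" "a < q"
  shows "finer_filters (kirch_F_residue q a) = {kirch_F_top, kirch_F_residue q a}"
proof
  have adm: "admissible (progression3 a q)" using a(1) by (rule admissible_progression3)
  show "finer_filters (kirch_F_residue q a) \<subseteq> {kirch_F_top, kirch_F_residue q a}"
  proof
    fix Y assume "Y \<in> finer_filters (kirch_F_residue q a)"
    then obtain E' where E': "admissible E'" "Y = kirch_F E'"
      and sub: "\<And>l. prime l \<Longrightarrow> odd l \<Longrightarrow> kirch_residues E' l \<subseteq> (if l = q then {0, a} else {0})"
      unfolding kirch_F_residue_def mem_finer_filters_kirch_F[OF adm]
      using kirch_residues_residue[OF q(1) a] by metis
    have "kirch_residues E' l = {0}" if "prime l" "odd l" "l \<noteq> q" for l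
      using sub[OF that(1,2)] that zero_in_kirch_residues[OF that(1)] by auto
    then show "Y \<in> {kirch_F_top, kirch_F_residue q a}"
      using kirch_F_supported_below_residue[OF E'(1) q a(1)] sub[OF q] E'(2) by simp
  qed
  show "{kirch_F_top, kirch_F_residue q a} \<subseteq> finer_filters (kirch_F_residue q a)"
    using kirch_F_top_in_finer_filters self_in_finer_filters kirch_F_in_kirch_filters[OF adm]
    unfolding kirch_F_residue_def by blast
qed

lemma finer_filters_double:
  assumes q: "prime q" "odd q"
  shows "finer_filters (kirch_F {q, 2 * q}) =
    {kirch_F_top, kirch_F {q, 2 * q}} \<union> kirch_F_residue q ` {0<..<q}"
proof
  have adm: "admissible {q, 2 * q}" using q(1) by (simp add: admissible_double prime_gt_0_nat)
  show "finer_filters (kirch_F {q, 2 * q}) \<subseteq>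
      {kirch_F_top, kirch_F {q, 2 * q}} \<union> kirch_F_residue q ` {0<..<q}"
  proof
    fix Y assume "Y \<in> finer_filters (kirch_F {q, 2 * q})"
    then obtain E' where E': "admissible E'" "Y = kirch_F E'"
      and sub: "\<And>l. prime l \<Longrightarrow> odd l \<Longrightarrow> kirch_residues E' l \<subseteq> (if l = q then {..<l} else {0})"
      unfolding mem_finer_filters_kirch_F[OF adm] using kirch_residues_double[OF q(1)] by metis
    have other: "kirch_residues E' l = {0}" if "prime l" "odd l" "l \<noteq> q" for l
      using sub[OF that(1,2)] that zero_in_kirch_residues[OF that(1)] by auto
    show "Y \<in> {kirch_F_top, kirch_F {q, 2 * q}} \<union> kirch_F_residue q ` {0<..<q}"
      by (rule kirch_F_supported_cases[OF E'(1) q(1) other]) (use E'(2) in auto)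
  qed
  have "kirch_F_residue q a \<in> finer_filters (kirch_F {q, 2 * q})" if "a \<in> {0<..<q}" for a
    using that q kirch_F_subset_residue_iff[OF adm q] kirch_residues_double[OF q(1) q]
      kirch_F_in_kirch_filters[OF admissible_progression3]
    unfolding finer_filters_def kirch_F_residue_def by auto
  then show "{kirch_F_top, kirch_F {q, 2 * q}} \<union> kirch_F_residue q ` {0<..<q} \<subseteq>
      finer_filters (kirch_F {q, 2 * q})"
    using kirch_F_top_in_finer_filters self_in_finer_filters kirch_F_in_kirch_filters[OF adm] by blast
qed

lemma card_finer_filters_double:
  assumes q: "prime q" "odd q"
  shows "card (finer_filters (kirch_F {q, 2 * q})) = q + 1"
proof -
  have adm: "admissible {q, 2 * q}" using q(1) by (simp add: admissible_double prime_gt_0_nat)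
  have full: "{..<q} \<noteq> {0, a}" for a
    using lessThan_not_subset_doubleton[OF odd_prime_ge_3[OF q]] by blast
  have double: "kirch_residues {q, 2 * q} q = {..<q}" using kirch_residues_double[OF q(1) q] by simp
  have residue: "kirch_residues (progression3 a q) q = {0, a}" if "a \<in> {0<..<q}" for a
    using that kirch_residues_residue[OF q(1) _ _ q] by simp
  have "kirch_F {q, 2 * q} \<noteq> kirch_F_top"
    using full[of 0] by (intro kirch_F_neq_topI[OF adm q]) (simp add: double)
  moreover have "kirch_F_residue q a \<noteq> kirch_F_top" if "a \<in> {0<..<q}" for a
    unfolding kirch_F_residue_def using that
    by (intro kirch_F_neq_topI[OF admissible_progression3 q]) (auto simp: residue)
  then have "kirch_F_top \<notin> kirch_F_residue q ` {0<..<q}" by force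
  moreover have "kirch_F {q, 2 * q} \<noteq> kirch_F_residue q a" if "a \<in> {0<..<q}" for a
    unfolding kirch_F_residue_def using that full[of a]
    by (intro kirch_F_neqI[OF adm admissible_progression3 q]) (auto simp: double residue)
  then have "kirch_F {q, 2 * q} \<notin> kirch_F_residue q ` {0<..<q}" by force
  moreover have "inj_on (kirch_F_residue q) {0<..<q}"
  proof
    fix a b assume a: "a \<in> {0<..<q}" and b: "b \<in> {0<..<q}"
      and "kirch_F_residue q a = kirch_F_residue q b"
    then have "kirch_residues (progression3 a q) q = kirch_residues (progression3 b q) q"
      using kirch_F_neqI[OF admissible_progression3 admissible_progression3 q, of a b]
      unfolding kirch_F_residue_def by auto
    then show "a = b" using a b by (auto simp: residue doubleton_eq_iff)
  qed
  ultimately show ?thesis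
    unfolding finer_filters_double[OF q] using q(1) by (simp add: card_image prime_gt_0_nat)
qed

lemma kirch_F_below_two_primes:
  assumes q1: "prime q1" "odd q1" and q2: "prime q2" "odd q2" and x: "\<not> q1 dvd x" "\<not> q2 dvd x"
    and "admissible E"
    and sub: "\<And>l. prime l \<Longrightarrow> odd l \<Longrightarrow> kirch_residues E l \<subseteq> kirch_residues (progression3 x (q1 * q2)) l"
  shows "kirch_F E \<in> {kirch_F_top, kirch_F_residue q1 (x mod q1), kirch_F_residue q2 (x mod q2),
    kirch_F (progression3 x (q1 * q2))}"
proof -
  have "0 < x" using x by (auto intro: gr0I)
  then have adm: "admissible (progression3 x (q1 * q2))" by (rule admissible_progression3)
  have a: "0 < x mod q1" "0 < x mod q2" using x by (auto simp: dvd_eq_mod_eq_0)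
  note profile = kirch_residues_two_primes[OF q1(1) q2(1) x]
  have other: "kirch_residues E l = {0}" if "prime l" "odd l" "l \<noteq> q1" "l \<noteq> q2" for l
    using sub[OF that(1,2)] profile[OF that(1,2)] that zero_in_kirch_residues[OF that(1)] by auto
  have at_q1: "kirch_residues E q1 \<subseteq> {0, x mod q1}" using sub[OF q1] profile[OF q1] by simp
  have at_q2: "kirch_residues E q2 \<subseteq> {0, x mod q2}" using sub[OF q2] profile[OF q2] by simp
  show ?thesis
  proof (cases "kirch_residues E q2 = {0}")
    case True
    then have "kirch_residues E l = {0}" if "prime l" "odd l" "l \<noteq> q1" for l
      using other[OF that] by (cases "l = q2") auto
    then show ?thesis using kirch_F_supported_below_residue[OF \<open>admissible E\<close> q1 a(1) at_q1] by auto
  next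
    case nontrivial_q2: False
    show ?thesis
    proof (cases "kirch_residues E q1 = {0}")
      case True
      then have "kirch_residues E l = {0}" if "prime l" "odd l" "l \<noteq> q2" for l
        using other[OF that(1,2) _ that(3)] by (cases "l = q1") auto
      then show ?thesis using kirch_F_supported_below_residue[OF \<open>admissible E\<close> q2 a(2) at_q2] by auto
    next
      case False
      then have "kirch_residues E q1 = {0, x mod q1}" "kirch_residues E q2 = {0, x mod q2}"
        using nontrivial_q2 at_q1 at_q2 zero_in_kirch_residues[OF q1(1)]
          zero_in_kirch_residues[OF q2(1)] by (auto intro: subset_zero_doubleton_eq)
      then have "kirch_F E = kirch_F (progression3 x (q1 * q2))"
        unfolding kirch_F_eq_iff[OF \<open>admissible E\<close> adm] using profile other by (metis (full_types))
      then show ?thesis by simp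
    qed
  qed
qed

lemma finer_filters_two_primes:
  assumes q1: "prime q1" "odd q1" and q2: "prime q2" "odd q2" and x: "\<not> q1 dvd x" "\<not> q2 dvd x"
  shows "finer_filters (kirch_F (progression3 x (q1 * q2))) =
    {kirch_F_top, kirch_F_residue q1 (x mod q1), kirch_F_residue q2 (x mod q2),
     kirch_F (progression3 x (q1 * q2))}" (is "finer_filters (kirch_F ?E) = _")
proof
  have "0 < x" using x by (auto intro: gr0I)
  then have adm: "admissible ?E" by (rule admissible_progression3)
  show "finer_filters (kirch_F ?E) \<subseteq> {kirch_F_top, kirch_F_residue q1 (x mod q1),
      kirch_F_residue q2 (x mod q2), kirch_F ?E}"
    unfolding mem_finer_filters_kirch_F[OF adm] subset_iff
    using kirch_F_below_two_primes[OF q1 q2 x] by blast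
  have "kirch_F_residue q (x mod q) \<in> finer_filters (kirch_F ?E)"
    if "prime q" "odd q" "\<not> q dvd x" "q = q1 \<or> q = q2" for q
  proof -
    have "0 < x mod q" "x mod q < q"
      using that(1,3) by (auto simp: dvd_eq_mod_eq_0 prime_gt_0_nat)
    moreover have "x mod q \<in> kirch_residues ?E q"
      using kirch_residues_two_primes[OF q1(1) q2(1) x that(1,2)] that(4) by auto
    ultimately have "kirch_F ?E \<subseteq> kirch_F_residue q (x mod q)"
      using kirch_F_subset_residue_iff[OF adm that(1,2)] by blast
    moreover have "kirch_F_residue q (x mod q) \<in> kirch_filters"
      unfolding kirch_F_residue_def using \<open>0 < x mod q\<close>
      by (intro kirch_F_in_kirch_filters admissible_progression3)
    ultimately show ?thesis unfolding finer_filters_def by blast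
  qed
  then show "{kirch_F_top, kirch_F_residue q1 (x mod q1), kirch_F_residue q2 (x mod q2), kirch_F ?E}
      \<subseteq> finer_filters (kirch_F ?E)"
    using q1 q2 x kirch_F_top_in_finer_filters self_in_finer_filters kirch_F_in_kirch_filters[OF adm]
    by blast
qed

lemma card_finer_filters_two_primes:
  assumes q1: "prime q1" "odd q1" and q2: "prime q2" "odd q2" and "q1 \<noteq> q2"
    and x: "\<not> q1 dvd x" "\<not> q2 dvd x"
  shows "3 \<le> card (finer_filters (kirch_F (progression3 x (q1 * q2))))"
    and "card (finer_filters (kirch_F (progression3 x (q1 * q2)))) \<le> 4"
proof -
  have "0 < x" using x by (auto intro: gr0I)
  then have adm: "admissible (progression3 x (q1 * q2))" by (rule admissible_progression3)
  have a: "0 < x mod q1" "x mod q1 < q1" "0 < x mod q2"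
    using x q1 q2 by (auto simp: dvd_eq_mod_eq_0 prime_gt_0_nat)
  note profile = kirch_residues_two_primes[OF q1(1) q2(1) x]
  have "kirch_F_residue q1 (x mod q1) \<noteq> kirch_F_top"
    unfolding kirch_F_residue_def using kirch_residues_residue[OF q1(1) a(1,2) q1] a(1)
    by (intro kirch_F_neq_topI[OF admissible_progression3[OF a(1)] q1]) auto
  moreover have "kirch_F (progression3 x (q1 * q2)) \<noteq> kirch_F_top"
    using profile[OF q1] a(1) by (intro kirch_F_neq_topI[OF adm q1]) auto
  moreover have "kirch_F (progression3 x (q1 * q2)) \<noteq> kirch_F_residue q1 (x mod q1)"
    unfolding kirch_F_residue_def using profile[OF q2] kirch_residues_residue[OF q1(1) a(1,2) q2] a(3)
      \<open>q1 \<noteq> q2\<close>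
    by (intro kirch_F_neqI[OF adm admissible_progression3[OF a(1)] q2]) auto
  ultimately show "3 \<le> card (finer_filters (kirch_F (progression3 x (q1 * q2))))"
    unfolding finer_filters_two_primes[OF q1 q2 x] by (simp add: card_insert_if)
  show "card (finer_filters (kirch_F (progression3 x (q1 * q2)))) \<le> 4"
    unfolding finer_filters_two_primes[OF q1 q2 x] by (simp add: card_insert_if)
qed

lemma card_finer_filters_two_residues:
  assumes adm: "admissible E"
    and proper: "\<And>Y. Y \<in> finer_filters (kirch_F E) \<Longrightarrow> Y \<noteq> kirch_F E \<Longrightarrow> card (finer_filters Y) \<le> 2"
    and q1: "prime q1" "odd q1" and q2: "prime q2" "odd q2" and "q1 \<noteq> q2"
    and a1: "a1 \<in> kirch_residues E q1" "a1 \<noteq> 0" and a2: "a2 \<in> kirch_residues E q2" "a2 \<noteq> 0"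
  shows "card (finer_filters (kirch_F E)) \<le> 4"
proof -
  have "coprime q1 q2" using q1(1) q2(1) \<open>q1 \<noteq> q2\<close> by (rule primes_coprime)
  then obtain x k1 k2 where x12: "x = a1 + k1 * q1" "x = a2 + k2 * q2"
    using chinese_remainder q1(1) q2(1) by (metis not_prime_0)
  have x1: "x mod q1 = a1" using x12(1) kirch_residues_less[OF a1(1)] by simp
  have x2: "x mod q2 = a2" using x12(2) kirch_residues_less[OF a2(1)] by simp
  have nd: "\<not> q1 dvd x" "\<not> q2 dvd x" using x1 x2 a1(2) a2(2) by (auto simp: dvd_eq_mod_eq_0)
  then have "0 < x" by (auto intro: gr0I)
  define Y where "Y = kirch_F (progression3 x (q1 * q2))"
  have "\<forall>l. prime l \<longrightarrow> odd l \<longrightarrow> kirch_residues (progression3 x (q1 * q2)) l \<subseteq> kirch_residues E l"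
    using kirch_residues_two_primes[OF q1(1) q2(1) nd] x1 x2 a1(1) a2(1) zero_in_kirch_residues by auto
  then have "Y \<in> finer_filters (kirch_F E)"
    unfolding Y_def mem_finer_filters_kirch_F[OF adm] using admissible_progression3[OF \<open>0 < x\<close>] by blast
  \<comment> \<open>Y has at least three refinements, so it cannot be a proper refinement.\<close>
  then have "Y = kirch_F E"
    using proper card_finer_filters_two_primes(1)[OF q1 q2 \<open>q1 \<noteq> q2\<close> nd] unfolding Y_def by fastforce
  then show ?thesis
    using card_finer_filters_two_primes(2)[OF q1 q2 \<open>q1 \<noteq> q2\<close> nd] unfolding Y_def by simp
qed

lemma kirch_F_above_two_doubles:
  assumes "admissible E" "prime q" "prime r" "q \<noteq> r"
    and "kirch_F {q, 2 * q} \<subseteq> kirch_F E" "kirch_F {r, 2 * r} \<subseteq> kirch_F E"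
  shows "kirch_F E = kirch_F_top"
  unfolding kirch_F_eq_top_iff[OF assms(1)]
proof (intro allI impI)
  fix l :: nat assume l: "prime l" "odd l"
  have "kirch_residues E l \<subseteq> kirch_residues {q, 2 * q} l"
    "kirch_residues E l \<subseteq> kirch_residues {r, 2 * r} l"
    using assms(5,6) kirch_F_subset_iff[OF admissible_double assms(1)] l assms(2,3)
    by (simp_all add: prime_gt_0_nat)
  then show "kirch_residues E l = {0}"
    using kirch_residues_double[OF assms(2) l] kirch_residues_double[OF assms(3) l] assms(4)
      zero_in_kirch_residues[OF l(1)] by (auto split: if_splits)
qed

lemma kirch_residues_support_cases:
  obtains q1 q2 a1 a2 where "prime q1" "odd q1" "prime q2" "odd q2" "q1 \<noteq> q2"
      "a1 \<in> kirch_residues E q1" "a1 \<noteq> 0" "a2 \<in> kirch_residues E q2" "a2 \<noteq> 0"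
    | q where "prime q" "odd q" "\<And>l. prime l \<Longrightarrow> odd l \<Longrightarrow> l \<noteq> q \<Longrightarrow> kirch_residues E l = {0}"
proof (cases "\<exists>q. prime q \<and> odd q \<and> kirch_residues E q \<noteq> {0}")
  case True
  then obtain q where q: "prime q" "odd q" "kirch_residues E q \<noteq> {0}" by blast
  show thesis
  proof (cases "\<exists>l. prime l \<and> odd l \<and> l \<noteq> q \<and> kirch_residues E l \<noteq> {0}")
    case True
    then obtain l where l: "prime l" "odd l" "l \<noteq> q" "kirch_residues E l \<noteq> {0}" by blast
    obtain a1 where "a1 \<in> kirch_residues E q" "a1 \<noteq> 0"
      using q(3) zero_in_kirch_residues[OF q(1)] by blast
    moreover obtain a2 where "a2 \<in> kirch_residues E l" "a2 \<noteq> 0"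
      using l(4) zero_in_kirch_residues[OF l(1)] by blast
    ultimately show thesis using that(1) q(1,2) l(1-3) by blast
  next
    case False
    then show thesis using that(2)[OF q(1,2)] by blast
  qed
next
  case False
  moreover have "prime (3::nat)" by simp
  ultimately show thesis using that(2)[of 3] by auto
qed

lemma kirch_F_supported_many_refinements:
  assumes "admissible E" "prime q" "odd q"
    and other: "\<And>l. prime l \<Longrightarrow> odd l \<Longrightarrow> l \<noteq> q \<Longrightarrow> kirch_residues E l = {0}"
    and "3 \<le> card (finer_filters (kirch_F E))"
  shows "kirch_F E = kirch_F {q, 2 * q}"
proof (rule kirch_F_supported_cases[OF assms(1,2) other])
  assume "kirch_F E = kirch_F_top"
  then show ?thesis using assms(5) finer_filters_top by simp
next
  fix a assume "0 < a" "a < q" "kirch_F E = kirch_F_residue q a"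
  then show ?thesis
    using assms(5) finer_filters_residue[OF assms(2,3)] by (auto simp: card_insert_if split: if_splits)
qed

section \<open>Homeomorphisms act on the poset\<close>

definition filter_image :: "('a \<Rightarrow> 'b) \<Rightarrow> 'a set set \<Rightarrow> 'b set set" where
  "filter_image h F = (\<lambda>A. h ` A) ` F"

lemma filter_image_mono: "F \<subseteq> F' \<Longrightarrow> filter_image h F \<subseteq> filter_image h F'"
  unfolding filter_image_def by blast

locale kirch_homeomorphism =
  fixes h g :: "nat \<Rightarrow> nat"
  assumes maps: "homeomorphic_maps kirch_topology kirch_topology h g"
begin

lemma homeomorphic: "homeomorphic_map kirch_topology kirch_topology h"
  using maps homeomorphic_maps_map by blast

lemma inverse: "kirch_homeomorphism g h"
  using maps homeomorphic_maps_sym by unfold_locales blast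

lemma inverse_apply: "x \<in> Npos \<Longrightarrow> g (h x) = x"
  using maps unfolding homeomorphic_maps_def topspace_kirch_topology by blast

lemma maps_Npos: "x \<in> Npos \<Longrightarrow> h x \<in> Npos"
  using homeomorphic_imp_surjective_map[OF homeomorphic] topspace_kirch_topology by blast

lemma filter_image_inverse: "F \<subseteq> Pow Npos \<Longrightarrow> filter_image g (filter_image h F) = F"
proof -
  assume F: "F \<subseteq> Pow Npos"
  have "g ` h ` A = A" if "A \<subseteq> Npos" for A
    using inverse_apply that by (force simp: image_image)
  then show ?thesis
    unfolding filter_image_def image_image using F by (simp add: subset_iff cong: image_cong)
qed

lemma admissible_image: "admissible E \<Longrightarrow> admissible (h ` E)"
  using maps_Npos unfolding admissible_def by auto

lemma filter_image_kirch_F_subset: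
  assumes "admissible E"
  shows "filter_image h (kirch_F E) \<subseteq> kirch_F (h ` E)"
proof
  fix B' assume "B' \<in> filter_image h (kirch_F E)"
  then obtain B where B': "B' = h ` B" and "B \<in> kirch_F E" unfolding filter_image_def by blast
  then obtain U where B: "B \<subseteq> Npos" and U: "\<forall>x\<in>E. U x \<in> kirch_nbhds x"
    and UB: "(\<Inter>x\<in>E. kirch_topology closure_of (U x)) \<subseteq> B"
    unfolding kirch_F_def by blast
  have UN: "U x \<subseteq> Npos" if "x \<in> E" for x
    using U that openin_subset topspace_kirch_topology unfolding kirch_nbhds_def by fastforce
  define U' where "U' y = h ` U (g y)" for y
  have U'h: "U' (h x) = h ` U x" if "x \<in> E" for x
    using inverse_apply assms that unfolding U'_def admissible_def by auto
  have "U' y \<in> kirch_nbhds y" if "y \<in> h ` E" for y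
    using that U UN U'h homeomorphic_map_openness[OF homeomorphic] topspace_kirch_topology
    unfolding kirch_nbhds_def by auto
  moreover have "(\<Inter>y\<in>h ` E. kirch_topology closure_of (U' y)) \<subseteq> h ` B"
  proof -
    have "(\<Inter>y\<in>h ` E. kirch_topology closure_of (U' y)) =
      (\<Inter>x\<in>E. h ` (kirch_topology closure_of (U x)))"
      using homeomorphic_map_closure_of[OF homeomorphic] UN U'h topspace_kirch_topology by simp
    also have "\<dots> = h ` (\<Inter>x\<in>E. kirch_topology closure_of (U x))"
    proof -
      obtain x0 where x0: "x0 \<in> E" using assms unfolding admissible_def by blast
      have "\<forall>x\<in>E. kirch_topology closure_of U x \<subseteq> topspace kirch_topology"
        by (simp add: closure_of_subset_topspace)
      then show ?thesis
        by (rule image_INT[symmetric, OF homeomorphic_imp_injective_map[OF homeomorphic] _ x0])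
    qed
    also have "\<dots> \<subseteq> h ` B" using UB by (rule image_mono)
    finally show ?thesis .
  qed
  moreover have "h ` B \<subseteq> Npos" using B maps_Npos by blast
  ultimately show "B' \<in> kirch_F (h ` E)" unfolding kirch_F_def B' by blast
qed

lemma filter_image_kirch_F:
  assumes "admissible E"
  shows "filter_image h (kirch_F E) = kirch_F (h ` E)"
proof
  interpret inv: kirch_homeomorphism g h by (rule inverse)
  show "filter_image h (kirch_F E) \<subseteq> kirch_F (h ` E)"
    using assms by (rule filter_image_kirch_F_subset)
  have "g ` h ` E = E"
    using inverse_apply assms unfolding admissible_def by (force simp: image_image)
  then have "filter_image g (kirch_F (h ` E)) \<subseteq> kirch_F E"
    using inv.filter_image_kirch_F_subset[OF admissible_image[OF assms]] by simp
  then have "filter_image h (filter_image g (kirch_F (h ` E))) \<subseteq> filter_image h (kirch_F E)"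
    by (rule filter_image_mono)
  moreover have "kirch_F (h ` E) \<subseteq> Pow Npos" unfolding kirch_F_def by blast
  ultimately show "kirch_F (h ` E) \<subseteq> filter_image h (kirch_F E)"
    using inv.filter_image_inverse by simp
qed

lemma filter_image_kirch_filters: "X \<in> kirch_filters \<Longrightarrow> filter_image h X \<in> kirch_filters"
  unfolding kirch_filters_def using filter_image_kirch_F admissible_image by blast

lemma finer_filters_image:
  assumes "X \<in> kirch_filters"
  shows "finer_filters (filter_image h X) = filter_image h ` finer_filters X"
proof
  interpret inv: kirch_homeomorphism g h by (rule inverse)
  show "filter_image h ` finer_filters X \<subseteq> finer_filters (filter_image h X)"
    unfolding finer_filters_def using filter_image_kirch_filters filter_image_mono by blast
  show "finer_filters (filter_image h X) \<subseteq> filter_image h ` finer_filters X"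
  proof
    fix Y assume "Y \<in> finer_filters (filter_image h X)"
    then have Y: "Y \<in> kirch_filters" "filter_image h X \<subseteq> Y" unfolding finer_filters_def by auto
    have "X \<subseteq> filter_image g Y"
      using filter_image_mono[OF Y(2), of g] filter_image_inverse[OF kirch_filters_Pow[OF assms]] by simp
    then have "filter_image g Y \<in> finer_filters X"
      unfolding finer_filters_def using inv.filter_image_kirch_filters[OF Y(1)] by blast
    moreover have "Y = filter_image h (filter_image g Y)"
      using inv.filter_image_inverse[OF kirch_filters_Pow[OF Y(1)]] by simp
    ultimately show "Y \<in> filter_image h ` finer_filters X" by blast
  qed
qed

lemma card_finer_filters_image:
  assumes "X \<in> kirch_filters"
  shows "card (finer_filters (filter_image h X)) = card (finer_filters X)"
proof -
  have "inj_on (filter_image h) (finer_filters X)"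
    by (rule inj_on_inverseI[where g = "filter_image g"])
      (simp add: finer_filters_def filter_image_inverse kirch_filters_Pow)
  then show ?thesis unfolding finer_filters_image[OF assms] by (rule card_image)
qed

lemma filter_image_top: "filter_image h kirch_F_top = kirch_F_top"
proof (rule antisym)
  interpret inv: kirch_homeomorphism g h by (rule inverse)
  have top: "kirch_F_top \<in> kirch_filters"
    unfolding kirch_F_top_def
    by (rule kirch_F_in_kirch_filters[OF admissible_progression3[OF zero_less_one]])
  show "filter_image h kirch_F_top \<subseteq> kirch_F_top"
    by (rule kirch_filters_subset_top[OF filter_image_kirch_filters[OF top]])
  have "filter_image g kirch_F_top \<subseteq> kirch_F_top"
    by (rule kirch_filters_subset_top[OF inv.filter_image_kirch_filters[OF top]])
  then have "filter_image h (filter_image g kirch_F_top) \<subseteq> filter_image h kirch_F_top"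
    by (rule filter_image_mono)
  then show "kirch_F_top \<subseteq> filter_image h kirch_F_top"
    using inv.filter_image_inverse[OF kirch_filters_Pow[OF top]] by simp
qed

lemma card_finer_filters_image_double:
  assumes "prime p" "odd p"
  shows "card (finer_filters (filter_image h (kirch_F {p, 2 * p}))) = p + 1"
  using assms card_finer_filters_image[OF kirch_F_in_kirch_filters[OF admissible_double]]
    card_finer_filters_double by (simp add: prime_gt_0_nat)

lemma card_proper_finer_filters_image_double:
  assumes p: "prime p" "odd p" and Y: "Y \<in> finer_filters (filter_image h (kirch_F {p, 2 * p}))"
    "Y \<noteq> filter_image h (kirch_F {p, 2 * p})"
  shows "card (finer_filters Y) \<le> 2"
proof -
  have "kirch_F {p, 2 * p} \<in> kirch_filters"
    using p(1) by (simp add: kirch_F_in_kirch_filters admissible_double prime_gt_0_nat)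
  then obtain Y0 where Y0: "Y0 \<in> finer_filters (kirch_F {p, 2 * p})" "Y = filter_image h Y0"
    using Y(1) finer_filters_image by blast
  then have "Y0 = kirch_F_top \<or> (\<exists>a\<in>{0<..<p}. Y0 = kirch_F_residue p a)"
    using Y(2) finer_filters_double[OF p] by auto
  then have "card (finer_filters Y0) \<le> 2"
    using finer_filters_top finer_filters_residue[OF p] by (auto simp: card_insert_if)
  moreover have "Y0 \<in> kirch_filters" using Y0(1) unfolding finer_filters_def by blast
  ultimately show ?thesis using Y0(2) card_finer_filters_image by simp
qed

lemma image_double_cases:
  assumes p: "prime p" "odd p"
  shows "filter_image h (kirch_F {p, 2 * p}) = kirch_F {p, 2 * p} \<or>
    (p = 3 \<and> (\<exists>r a. prime r \<and> odd r \<and> r \<noteq> 3 \<and> 0 < a \<and> a < r \<and>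
       filter_image h (kirch_F {p, 2 * p}) \<subseteq> kirch_F_residue r a))"
proof -
  define E where "E = h ` {p, 2 * p}"
  have "admissible {p, 2 * p}" using p(1) by (simp add: admissible_double prime_gt_0_nat)
  then have adm: "admissible E" and X: "filter_image h (kirch_F {p, 2 * p}) = kirch_F E"
    unfolding E_def by (rule admissible_image, rule filter_image_kirch_F)
  have card: "card (finer_filters (kirch_F E)) = p + 1"
    using card_finer_filters_image_double[OF p] X by simp
  have "3 \<le> p" using odd_prime_ge_3[OF p] .
  show ?thesis
  proof (rule kirch_residues_support_cases[of E])
    fix q1 q2 a1 a2 assume q1: "prime q1" "odd q1" and q2: "prime q2" "odd q2" and "q1 \<noteq> q2"
      and a1: "a1 \<in> kirch_residues E q1" "a1 \<noteq> 0" and a2: "a2 \<in> kirch_residues E q2" "a2 \<noteq> 0"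
    have "card (finer_filters (kirch_F E)) \<le> 4"
      using card_proper_finer_filters_image_double[OF p] X
      by (intro card_finer_filters_two_residues[OF adm _ q1 q2 \<open>q1 \<noteq> q2\<close> a1 a2]) simp
    then have "p = 3" using card \<open>3 \<le> p\<close> by simp
    moreover have "kirch_F E \<subseteq> kirch_F_residue q1 a1" "kirch_F E \<subseteq> kirch_F_residue q2 a2"
      using kirch_F_subset_residue_iff[OF adm] q1 q2 a1 a2 kirch_residues_less by auto
    ultimately show ?thesis
      using X q1 q2 a1 a2 kirch_residues_less \<open>q1 \<noteq> q2\<close> by (metis neq0_conv)
  next
    fix q assume q: "prime q" "odd q"
      and "\<And>l. prime l \<Longrightarrow> odd l \<Longrightarrow> l \<noteq> q \<Longrightarrow> kirch_residues E l = {0}"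
    then have "kirch_F E = kirch_F {q, 2 * q}"
      using card \<open>3 \<le> p\<close> by (intro kirch_F_supported_many_refinements[OF adm q]) auto
    moreover from this have "q = p" using card card_finer_filters_double[OF q] by simp
    ultimately show ?thesis using X by simp
  qed
qed

lemma image_double_not_below_residue:
  assumes q: "prime q" "odd q" and r: "prime r" "odd r" "q \<noteq> r" and a: "0 < a" "a < r"
    and fixed: "filter_image h (kirch_F {r, 2 * r}) = kirch_F {r, 2 * r}"
  shows "\<not> filter_image h (kirch_F {q, 2 * q}) \<subseteq> kirch_F_residue r a"
proof
  interpret inv: kirch_homeomorphism g h by (rule inverse)
  assume below: "filter_image h (kirch_F {q, 2 * q}) \<subseteq> kirch_F_residue r a"
  have doubles: "kirch_F {l, 2 * l} \<in> kirch_filters" if "prime l" for l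
    using that by (simp add: kirch_F_in_kirch_filters admissible_double prime_gt_0_nat)
  have residue: "kirch_F_residue r a \<in> kirch_filters"
    unfolding kirch_F_residue_def using a(1) by (intro kirch_F_in_kirch_filters admissible_progression3)
  define W where "W = filter_image g (kirch_F_residue r a)"
  obtain E where E: "admissible E" "W = kirch_F E"
    using inv.filter_image_kirch_filters[OF residue] unfolding W_def kirch_filters_def by blast
  have "filter_image g (filter_image h (kirch_F {q, 2 * q})) \<subseteq> W"
    unfolding W_def using below by (rule filter_image_mono)
  then have "kirch_F {q, 2 * q} \<subseteq> W"
    using filter_image_inverse[OF kirch_filters_Pow[OF doubles[OF q(1)]]] by simp
  moreover have "kirch_F {r, 2 * r} \<subseteq> kirch_F_residue r a"
    using finer_filters_double[OF r(1,2)] a unfolding finer_filters_def by auto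
  then have "filter_image g (filter_image h (kirch_F {r, 2 * r})) \<subseteq> W"
    unfolding W_def fixed by (rule filter_image_mono)
  then have "kirch_F {r, 2 * r} \<subseteq> W"
    using filter_image_inverse[OF kirch_filters_Pow[OF doubles[OF r(1)]]] by simp
  ultimately have "W = kirch_F_top"
    using kirch_F_above_two_doubles[OF E(1) q(1) r(1,3)] E(2) by simp
  then have "kirch_F_residue r a = kirch_F_top"
    using filter_image_top inv.filter_image_inverse[OF kirch_filters_Pow[OF residue]]
    unfolding W_def by metis
  moreover have "kirch_F_residue r a \<noteq> kirch_F_top"
    unfolding kirch_F_residue_def using kirch_residues_residue[OF r(1) a r(1,2)] a(1)
    by (intro kirch_F_neq_topI[OF admissible_progression3[OF a(1)] r(1,2)]) simp
  ultimately show False by blast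
qed

end

theorem lemma3p13:
  fixes h :: "nat \<Rightarrow> nat" and p :: nat
  assumes "homeomorphic_map kirch_topology kirch_topology h"
    and "prime p" and "odd p"
  shows "(\<lambda>A. h ` A) ` kirch_F {p, 2 * p} = kirch_F {p, 2 * p}"
proof -
  obtain g where "homeomorphic_maps kirch_topology kirch_topology h g"
    using assms(1) homeomorphic_map_maps by blast
  then interpret kirch_homeomorphism h g by unfold_locales
  have "filter_image h (kirch_F {p, 2 * p}) = kirch_F {p, 2 * p}"
  proof (rule ccontr)
    assume "filter_image h (kirch_F {p, 2 * p}) \<noteq> kirch_F {p, 2 * p}"
    then obtain r a where r: "p = 3" "prime r" "odd r" "r \<noteq> 3" "0 < a" "a < r"
      and below: "filter_image h (kirch_F {p, 2 * p}) \<subseteq> kirch_F_residue r a"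
      using image_double_cases[OF assms(2,3)] by blast
    have "filter_image h (kirch_F {r, 2 * r}) = kirch_F {r, 2 * r}"
      using image_double_cases[OF r(2,3)] r(4) by blast
    then show False
      using image_double_not_below_residue[OF assms(2,3) r(2,3) _ r(5,6)] below r(1,4) by blast
  qed
  then show ?thesis unfolding filter_image_def .
qed

end
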